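(* Let $L$ be a number field, $\Gamma$ an order of $L$, $K\subseteq L$ a subfield with ring of integers $\mathcal O_K$ and $n=[L:K]$, and $\varphi:K\to L$ a ring morphism. Then there exists an injection $J_\varphi\hookrightarrow C_\Gamma$.
   Context: Fix a positive integer $z$ with $\varphi(z\mathcal O_K)\subseteq\Gamma$, let $\mathcal O'=\mathbb Z[z\mathcal O_K]$; via $\varphi|_{\mathcal O'}:\mathcal O'\to\Gamma$ each $\Gamma$-module $X$ becomes an $\mathcal O'$-module $X|_{\mathcal O'}$, and $\mathcal O_K^n|_{\mathcal O'}$ denotes $\mathcal O_K^n$ with $\mathcal O'$ acting by multiplication. $J_\varphi$ is the set of isomorphism classes of $\Gamma$-modules $X$ with $X|_{\mathcal O'}\cong\mathcal O_K^n|_{\mathcal O'}$. A fractional ideal of $\Gamma$ is a nonzero $\Gamma$-submodule $I\subseteq L$ with $xI\subseteq\Gamma$ for some nonzero $x\in L$; two are equivalent if $I'=xI$ for some nonzero $x\in L$; $C_\Gamma$ is the set of equivalence classes (a commutative monoid under ideal multiplication). *)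

theory Defs
  imports Complex_Main "HOL-Computational_Algebra.Polynomial"
begin

definition is_subring :: "complex set \<Rightarrow> bool" where
  "is_subring R \<longleftrightarrow> 1 \<in> R \<and> (\<forall>a\<in>R. \<forall>b\<in>R. a + b \<in> R \<and> a * b \<in> R) \<and> (\<forall>a\<in>R. - a \<in> R)"

definition is_subfield :: "complex set \<Rightarrow> bool" where
  "is_subfield K \<longleftrightarrow> is_subring K \<and> (\<forall>a\<in>K. a \<noteq> 0 \<longrightarrow> inverse a \<in> K)"

definition gen_subring :: "complex set \<Rightarrow> complex set" where
  "gen_subring S = \<Inter>{R. is_subring R \<and> S \<subseteq> R}"

definition span_over :: "complex set \<Rightarrow> complex set \<Rightarrow> complex set" where
  "span_over S B = {\<Sum>b\<in>B. c b * b | c. \<forall>b\<in>B. c b \<in> S}"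

definition basis_over :: "complex set \<Rightarrow> complex set \<Rightarrow> complex set \<Rightarrow> bool" where
  "basis_over K L B \<longleftrightarrow> finite B \<and> B \<subseteq> L \<and> L = span_over K B \<and>
     (\<forall>c. (\<forall>b\<in>B. c b \<in> K) \<and> (\<Sum>b\<in>B. c b * b) = 0 \<longrightarrow> (\<forall>b\<in>B. c b = 0))"

definition field_degree :: "complex set \<Rightarrow> complex set \<Rightarrow> nat \<Rightarrow> bool" where
  "field_degree K L n \<longleftrightarrow> (\<exists>B. basis_over K L B \<and> card B = n)"

definition number_field :: "complex set \<Rightarrow> bool" where
  "number_field L \<longleftrightarrow> is_subfield L \<and> (\<exists>d. field_degree \<rat> L d)"

definition is_order :: "complex set \<Rightarrow> complex set \<Rightarrow> bool" where
  "is_order \<Gamma> L \<longleftrightarrow> is_subring \<Gamma> \<and> \<Gamma> \<subseteq> L \<and>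
     (\<exists>B. finite B \<and> B \<subseteq> \<Gamma> \<and> \<Gamma> = span_over \<int> B) \<and>
     (\<exists>B. finite B \<and> B \<subseteq> \<Gamma> \<and> L = span_over \<rat> B)"

definition algebraic_integer :: "complex \<Rightarrow> bool" where
  "algebraic_integer x \<longleftrightarrow> (\<exists>p :: int poly. lead_coeff p = 1 \<and> poly (map_poly of_int p) x = 0)"

definition ring_of_integers :: "complex set \<Rightarrow> complex set" where
  "ring_of_integers K = {x \<in> K. algebraic_integer x}"

definition ring_morphism_on :: "complex set \<Rightarrow> complex set \<Rightarrow> (complex \<Rightarrow> complex) \<Rightarrow> bool" where
  "ring_morphism_on K L \<phi> \<longleftrightarrow> \<phi> ` K \<subseteq> L \<and> \<phi> 1 = 1 \<and>
     (\<forall>a\<in>K. \<forall>b\<in>K. \<phi> (a + b) = \<phi> a + \<phi> b \<and> \<phi> (a * b) = \<phi> a * \<phi> b)"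

record 'm cmod =
  mcarrier :: "'m set"
  madd :: "'m \<Rightarrow> 'm \<Rightarrow> 'm"
  mzero :: 'm
  msmul :: "complex \<Rightarrow> 'm \<Rightarrow> 'm"

definition is_module :: "complex set \<Rightarrow> ('m, 'e) cmod_scheme \<Rightarrow> bool" where
  "is_module R X \<longleftrightarrow>
     mzero X \<in> mcarrier X \<and>
     (\<forall>x\<in>mcarrier X. \<forall>y\<in>mcarrier X. madd X x y \<in> mcarrier X) \<and>
     (\<forall>x\<in>mcarrier X. \<forall>y\<in>mcarrier X. \<forall>w\<in>mcarrier X.
         madd X (madd X x y) w = madd X x (madd X y w)) \<and>
     (\<forall>x\<in>mcarrier X. \<forall>y\<in>mcarrier X. madd X x y = madd X y x) \<and>
     (\<forall>x\<in>mcarrier X. madd X (mzero X) x = x) \<and>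
     (\<forall>x\<in>mcarrier X. \<exists>y\<in>mcarrier X. madd X x y = mzero X) \<and>
     (\<forall>r\<in>R. \<forall>x\<in>mcarrier X. msmul X r x \<in> mcarrier X) \<and>
     (\<forall>r\<in>R. \<forall>x\<in>mcarrier X. \<forall>y\<in>mcarrier X.
         msmul X r (madd X x y) = madd X (msmul X r x) (msmul X r y)) \<and>
     (\<forall>r\<in>R. \<forall>s\<in>R. \<forall>x\<in>mcarrier X. msmul X (r + s) x = madd X (msmul X r x) (msmul X s x)) \<and>
     (\<forall>r\<in>R. \<forall>s\<in>R. \<forall>x\<in>mcarrier X. msmul X (r * s) x = msmul X r (msmul X s x)) \<and>
     (\<forall>x\<in>mcarrier X. msmul X 1 x = x)"

definition mod_iso :: "complex set \<Rightarrow> ('m, 'e) cmod_scheme \<Rightarrow> ('n, 'f) cmod_scheme \<Rightarrow> bool" where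
  "mod_iso R X Y \<longleftrightarrow> (\<exists>f. bij_betw f (mcarrier X) (mcarrier Y) \<and>
     (\<forall>x\<in>mcarrier X. \<forall>y\<in>mcarrier X. f (madd X x y) = madd Y (f x) (f y)) \<and>
     (\<forall>r\<in>R. \<forall>x\<in>mcarrier X. f (msmul X r x) = msmul Y r (f x)))"

definition restrict_scalars :: "(complex \<Rightarrow> complex) \<Rightarrow> 'm cmod \<Rightarrow> 'm cmod" where
  "restrict_scalars \<phi> X = X\<lparr>msmul := (\<lambda>a x. msmul X (\<phi> a) x)\<rparr>"

definition free_power :: "complex set \<Rightarrow> nat \<Rightarrow> (nat \<Rightarrow> complex) cmod" where
  "free_power Ri n = \<lparr>mcarrier = {v. (\<forall>i<n. v i \<in> Ri) \<and> (\<forall>i\<ge>n. v i = 0)},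
                     madd = (\<lambda>v w i. v i + w i), mzero = (\<lambda>i. 0),
                     msmul = (\<lambda>a v i. a * v i)\<rparr>"

text \<open>Representatives of \<open>J_\<phi>\<close> (with carriers in the type \<open>'m\<close>), for given
  \<open>K, \<phi>, \<Gamma>, n, z\<close>; \<open>O' = \<int>[z O_K]\<close>.\<close>
definition J_modules :: "complex set \<Rightarrow> (complex \<Rightarrow> complex) \<Rightarrow> complex set \<Rightarrow> nat \<Rightarrow> int \<Rightarrow> 'm cmod set" where
  "J_modules K \<phi> \<Gamma> n z =
     (let OK = ring_of_integers K; O' = gen_subring ((\<lambda>a. of_int z * a) ` OK) in
      {X. is_module \<Gamma> X \<and> mod_iso O' (restrict_scalars \<phi> X) (free_power OK n)})"

definition J_phi :: "complex set \<Rightarrow> (complex \<Rightarrow> complex) \<Rightarrow> complex set \<Rightarrow> nat \<Rightarrow> int \<Rightarrow> 'm cmod set set" where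
  "J_phi K \<phi> \<Gamma> n z = J_modules K \<phi> \<Gamma> n z //
     {(X, Y). X \<in> J_modules K \<phi> \<Gamma> n z \<and> Y \<in> J_modules K \<phi> \<Gamma> n z \<and> mod_iso \<Gamma> X Y}"

definition fractional_ideal :: "complex set \<Rightarrow> complex set \<Rightarrow> complex set \<Rightarrow> bool" where
  "fractional_ideal \<Gamma> L I \<longleftrightarrow> I \<subseteq> L \<and> I \<noteq> {0} \<and> 0 \<in> I \<and>
     (\<forall>a\<in>I. \<forall>b\<in>I. a + b \<in> I) \<and> (\<forall>g\<in>\<Gamma>. \<forall>a\<in>I. g * a \<in> I) \<and>
     (\<exists>x\<in>L. x \<noteq> 0 \<and> (\<lambda>a. x * a) ` I \<subseteq> \<Gamma>)"

definition C_Gamma :: "complex set \<Rightarrow> complex set \<Rightarrow> complex set set set" where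
  "C_Gamma \<Gamma> L = {I. fractional_ideal \<Gamma> L I} //
     {(I, I'). fractional_ideal \<Gamma> L I \<and> fractional_ideal \<Gamma> L I' \<and>
               (\<exists>x\<in>L. x \<noteq> 0 \<and> I' = (\<lambda>a. x * a) ` I)}"

end

(*
  The Gamma-module structure of X is transported along X|O' = O_K^n to an action of Gamma on
  M = O_K^n inside C^n.  As Gamma spans L over Q, every nonzero delta in Gamma has a positive
  integer multiple of its inverse in Gamma; hence the action is torsion-free and the orbit map
  gamma |-> gamma.e of a nonzero e in M is injective.  Gamma contains n [K:Q] elements that are
  linearly independent over Q, while M lies in a Q-space spanned by n [K:Q] vectors, so their
  images span M over Q: every w in M has a positive integer multiple m w = gamma_w.e.  Since
  z O_K acts through phi by multiplication, one m serves for all of M, and w |-> gamma_w maps X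
  isomorphically onto an ideal of Gamma.  Proportional ideals give isomorphic modules, so
  choosing such an ideal for every class of J_phi yields an injection into C_Gamma.
*)

theory Submission
  imports Defs "HOL-Library.Function_Algebras"
begin

section \<open>Subrings, ring morphisms and denominators\<close>

lemma subring_one: "is_subring R \<Longrightarrow> 1 \<in> R"
  and subring_add: "is_subring R \<Longrightarrow> a \<in> R \<Longrightarrow> b \<in> R \<Longrightarrow> a + b \<in> R"
  and subring_mult: "is_subring R \<Longrightarrow> a \<in> R \<Longrightarrow> b \<in> R \<Longrightarrow> a * b \<in> R"
  and subring_uminus: "is_subring R \<Longrightarrow> a \<in> R \<Longrightarrow> - a \<in> R"
  unfolding is_subring_def by auto

lemma subring_zero: "is_subring R \<Longrightarrow> 0 \<in> R"
  by (metis add.right_inverse subring_add subring_one subring_uminus)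

lemma subring_diff: "is_subring R \<Longrightarrow> a \<in> R \<Longrightarrow> b \<in> R \<Longrightarrow> a - b \<in> R"
  by (metis diff_conv_add_uminus subring_add subring_uminus)

lemma subring_of_nat: "is_subring R \<Longrightarrow> of_nat k \<in> R"
  by (induction k) (auto intro: subring_zero subring_add subring_one)

lemma subring_of_int: "is_subring R \<Longrightarrow> of_int k \<in> R"
  by (cases k rule: int_cases2) (auto intro: subring_of_nat subring_uminus)

lemma subring_sum: "is_subring R \<Longrightarrow> (\<And>x. x \<in> A \<Longrightarrow> f x \<in> R) \<Longrightarrow> sum f A \<in> R"
  by (induction A rule: infinite_finite_induct) (auto intro: subring_zero subring_add)

lemma subring_Ints: "is_subring R \<Longrightarrow> q \<in> \<int> \<Longrightarrow> q \<in> R"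
  by (auto elim!: Ints_cases intro: subring_of_int)

lemma subfield_subring: "is_subfield K \<Longrightarrow> is_subring K"
  and subfield_inverse: "is_subfield K \<Longrightarrow> a \<in> K \<Longrightarrow> inverse a \<in> K"
  unfolding is_subfield_def by (auto simp: inverse_eq_divide)

lemma subfield_divide: "is_subfield K \<Longrightarrow> a \<in> K \<Longrightarrow> b \<in> K \<Longrightarrow> a / b \<in> K"
  by (simp add: divide_inverse subfield_inverse subring_mult subfield_subring)

lemma subfield_Rats: "is_subfield K \<Longrightarrow> q \<in> \<rat> \<Longrightarrow> q \<in> K"
  by (auto elim!: Rats_cases' intro!: subfield_divide subring_of_int subfield_subring)

lemma gen_subring_subring: "is_subring (gen_subring S)"
  and gen_subring_base: "S \<subseteq> gen_subring S"
  and gen_subring_least: "is_subring R \<Longrightarrow> S \<subseteq> R \<Longrightarrow> gen_subring S \<subseteq> R"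
  unfolding gen_subring_def is_subring_def by auto

lemma ring_morphism_on_zero:
  assumes "ring_morphism_on K L \<phi>" "is_subring K"
  shows "\<phi> 0 = 0"
  using assms subring_zero[OF assms(2)] unfolding ring_morphism_on_def by (metis add.right_neutral add_left_imp_eq)

lemma ring_morphism_on_uminus:
  assumes "ring_morphism_on K L \<phi>" "is_subring K" "a \<in> K"
  shows "\<phi> (- a) = - \<phi> a"
proof -
  have "\<phi> (a + - a) = \<phi> a + \<phi> (- a)"
    using assms(1,3) subring_uminus[OF assms(2,3)] unfolding ring_morphism_on_def by blast
  then show ?thesis
    using ring_morphism_on_zero[OF assms(1,2)] by (simp add: add_eq_0_iff)
qed

lemma ring_morphism_on_of_int:
  assumes mor: "ring_morphism_on K L \<phi>" and K: "is_subring K"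
  shows "\<phi> (of_int k) = of_int k"
proof -
  have of_nat: "\<phi> (of_nat m) = of_nat m" for m
    using mor ring_morphism_on_zero[OF mor K]
    by (induction m) (auto simp: ring_morphism_on_def subring_of_nat[OF K] subring_one[OF K])
  show ?thesis
    by (cases k rule: int_cases2)
      (simp_all add: of_nat ring_morphism_on_uminus[OF mor K] subring_of_nat[OF K])
qed

lemma ex_common_positive_multiple:
  assumes "finite A" "\<And>a. a \<in> A \<Longrightarrow> \<exists>N::int. N > 0 \<and> P a N"
    and "\<And>a N k. P a N \<Longrightarrow> k > 0 \<Longrightarrow> P a (k * N)"
  shows "\<exists>N::int. N > 0 \<and> (\<forall>a\<in>A. P a N)"
  using assms
proof (induction A rule: finite_induct)
  case empty
  show ?case by (intro exI[of _ 1]) auto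
next
  case (insert x F)
  then obtain N where N: "N > 0" "\<forall>a\<in>F. P a N" by blast
  obtain M where M: "M > 0" "P x M" using insert by blast
  have "\<forall>a\<in>insert x F. P a (M * N)"
    using N M insert.prems(2) by (metis insert_iff mult.commute)
  then show ?case using N M by (intro exI[of _ "M * N"]) auto
qed

lemma rat_common_denominator:
  fixes c :: "'a \<Rightarrow> rat"
  assumes "finite A"
  obtains D :: int and \<alpha> :: "'a \<Rightarrow> int" where "D > 0" "\<And>a. a \<in> A \<Longrightarrow> of_int D * c a = of_int (\<alpha> a)"
proof -
  have "\<exists>D::int. D > 0 \<and> (\<forall>a\<in>A. \<exists>k::int. of_int D * c a = of_int k)"
  proof (rule ex_common_positive_multiple[OF assms])
    fix a
    obtain p q where "quotient_of (c a) = (p, q)" by fastforce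
    then have "q > 0" "c a = of_int p / of_int q"
      by (auto simp: quotient_of_denom_pos quotient_of_div)
    then have "q > 0" "of_int q * c a = of_int p"
      by auto
    then show "\<exists>D::int. D > 0 \<and> (\<exists>k::int. of_int D * c a = of_int k)" by blast
  next
    fix a N and k :: int
    assume "\<exists>m::int. of_int N * c a = of_int m"
    then show "\<exists>m::int. of_int (k * N) * c a = of_int m"
      by (metis mult.assoc of_int_mult)
  qed
  then show ?thesis using that by metis
qed

lemma Rats_common_denominator:
  assumes "finite A" "\<And>a. a \<in> A \<Longrightarrow> (q a :: complex) \<in> \<rat>"
  shows "\<exists>D::int. D > 0 \<and> (\<forall>a\<in>A. of_int D * q a \<in> \<int>)"
proof (rule ex_common_positive_multiple[OF assms(1)])
  fix a assume "a \<in> A"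
  with assms(2) show "\<exists>D::int. D > 0 \<and> of_int D * q a \<in> \<int>"
    by (cases rule: Rats_cases'[of "q a"]) auto
qed (metis Ints_mult Ints_of_int mult.assoc of_int_mult)

lemma order_common_denominator:
  assumes ord: "is_order \<Gamma> L" and "finite A" "A \<subseteq> L"
  shows "\<exists>N::int. N > 0 \<and> (\<forall>a\<in>A. of_int N * a \<in> \<Gamma>)"
proof (rule ex_common_positive_multiple[OF assms(2)])
  fix l assume "l \<in> A"
  then have "l \<in> L" using assms(3) by blast
  obtain B where B: "finite B" "B \<subseteq> \<Gamma>" "L = span_over \<rat> B" and \<Gamma>: "is_subring \<Gamma>"
    using ord unfolding is_order_def by blast
  then obtain c where c: "\<forall>b\<in>B. c b \<in> \<rat>" "l = (\<Sum>b\<in>B. c b * b)"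
    using \<open>l \<in> L\<close> unfolding span_over_def by blast
  obtain N :: int where N: "N > 0" "\<forall>b\<in>B. of_int N * c b \<in> \<int>"
    using Rats_common_denominator[OF B(1)] c(1) by blast
  have "of_int N * l = (\<Sum>b\<in>B. (of_int N * c b) * b)"
    by (simp add: c(2) sum_distrib_left mult.assoc)
  also have "\<dots> \<in> \<Gamma>"
    by (rule subring_sum[OF \<Gamma>]) (use N B in \<open>auto intro: subring_mult[OF \<Gamma>] subring_Ints[OF \<Gamma>]\<close>)
  finally show "\<exists>N::int. N > 0 \<and> of_int N * l \<in> \<Gamma>" using N by blast
next
  fix a N and k :: int
  assume "of_int N * a \<in> \<Gamma>"
  then show "of_int (k * N) * a \<in> \<Gamma>"
    using ord subring_mult subring_of_int unfolding is_order_def by (metis mult.assoc of_int_mult)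
qed

section \<open>Linear algebra over \<open>\<rat>\<close>\<close>

lemma sum_fun_apply: "(\<Sum>x\<in>A. f x) j = (\<Sum>x\<in>A. f x j)"
  by (induction A rule: infinite_finite_induct) auto

lemma (in vector_space) independent_family_image:
  assumes "finite A" and indep: "\<And>c. (\<Sum>a\<in>A. c a *s f a) = 0 \<Longrightarrow> \<forall>a\<in>A. c a = 0"
  shows "inj_on f A" "independent (f ` A)"
proof -
  show inj: "inj_on f A"
  proof (rule inj_onI, rule ccontr)
    fix a a' assume aa: "a \<in> A" "a' \<in> A" "f a = f a'" "a \<noteq> a'"
    define c :: "_ \<Rightarrow> 'a" where "c x = (if x = a then 1 else if x = a' then -1 else 0)" for x
    have "(\<Sum>x\<in>A. c x *s f x) = (\<Sum>x\<in>A. if x = a then f x else 0) - (\<Sum>x\<in>A. if x = a' then f x else 0)"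
      unfolding sum_subtractf[symmetric] using aa(4) by (intro sum.cong) (auto simp: c_def)
    also have "\<dots> = 0" using aa(1-3) assms(1) by simp
    finally have "c a = 0" using indep[of c] aa(1) by blast
    then show False by (simp add: c_def)
  qed
  show "independent (f ` A)"
  proof
    assume "dependent (f ` A)"
    then obtain u where u: "\<exists>v\<in>f ` A. u v \<noteq> 0" "(\<Sum>v\<in>f ` A. u v *s v) = 0"
      using dependent_finite[OF finite_imageI[OF assms(1)]] by blast
    then have "(\<Sum>a\<in>A. u (f a) *s f a) = 0" by (simp add: sum.reindex[OF inj])
    then show False using indep[of "u \<circ> f"] u(1) by auto
  qed
qed

lemma (in vector_space) independent_card_ge_span:
  assumes "finite C" "B \<subseteq> span C" "independent B" "card C \<le> card B"
  shows "span C \<subseteq> span B"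
proof
  fix a assume a: "a \<in> span C"
  show "a \<in> span B"
  proof (rule ccontr)
    assume "a \<notin> span B"
    then have "independent (insert a B)" "a \<notin> B"
      using assms(3) independent_insertI span_base by auto
    moreover have "insert a B \<subseteq> span C"
      using a assms(2) by blast
    ultimately have "card (insert a B) \<le> card C"
      using independent_span_bound[OF assms(1)] by auto
    moreover have "finite B"
      using independent_span_bound[OF assms(1,3,2)] by simp
    ultimately show False
      using assms(4) \<open>a \<notin> B\<close> by simp
  qed
qed

interpretation Q_cplx: vector_space "\<lambda>(q::rat) (x::complex). of_rat q * x"
  by unfold_locales (auto simp: algebra_simps of_rat_add of_rat_mult)

interpretation Q_vec: vector_space "\<lambda>(q::rat) (v::nat \<Rightarrow> complex) j. of_rat q * v j"
  by unfold_locales (auto simp: fun_eq_iff algebra_simps of_rat_add of_rat_mult)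

definition rat_independent :: "'a set \<Rightarrow> ('a \<Rightarrow> complex) \<Rightarrow> bool" where
  "rat_independent A f \<longleftrightarrow> (\<forall>c. (\<Sum>a\<in>A. of_rat (c a) * f a) = 0 \<longrightarrow> (\<forall>a\<in>A. c a = 0))"

lemma rat_independent_products:
  assumes K: "is_subfield K" and B: "basis_over K L B"
    and e: "rat_independent E e" "e ` E \<subseteq> K"
  shows "rat_independent (B \<times> E) (\<lambda>(b, i). b * e i)"
  unfolding rat_independent_def
proof (intro allI impI)
  fix c assume "(\<Sum>p\<in>B \<times> E. of_rat (c p) * (case p of (b, i) \<Rightarrow> b * e i)) = 0"
  then have "(\<Sum>b\<in>B. (\<Sum>i\<in>E. of_rat (c (b, i)) * e i) * b) = 0"
    by (simp add: sum.cartesian_product' sum_distrib_left sum_distrib_right mult_ac)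
  moreover have "(\<Sum>i\<in>E. of_rat (c (b, i)) * e i) \<in> K" for b
    using e(2) subring_mult[OF subfield_subring[OF K] subfield_Rats[OF K Rats_of_rat]]
    by (intro subring_sum[OF subfield_subring[OF K]]) blast
  ultimately have "\<forall>b\<in>B. (\<Sum>i\<in>E. of_rat (c (b, i)) * e i) = 0"
    using B unfolding basis_over_def
    by (elim conjE allE[of _ "\<lambda>b. \<Sum>i\<in>E. of_rat (c (b, i)) * e i"]) blast
  then have "\<forall>i\<in>E. c (b, i) = 0" if "b \<in> B" for b
    using e(1) that unfolding rat_independent_def by (elim allE[of _ "\<lambda>i. c (b, i)"]) auto
  then show "\<forall>p\<in>B \<times> E. c p = 0"
    by blast
qed

lemma rat_independent_scale:
  assumes "rat_independent A f" "N \<noteq> 0"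
  shows "rat_independent A (\<lambda>a. of_int N * f a)"
  unfolding rat_independent_def
proof (intro allI impI)
  fix c assume "(\<Sum>a\<in>A. of_rat (c a) * (of_int N * f a)) = 0"
  then have "(\<Sum>a\<in>A. of_rat (c a * of_int N) * f a) = 0"
    by (simp add: of_rat_mult mult_ac)
  then show "\<forall>a\<in>A. c a = 0"
    using assms unfolding rat_independent_def by fastforce
qed

lemma free_power_subset_span:
  assumes "finite E" "R \<subseteq> Q_cplx.span E"
  shows "mcarrier (free_power R n) \<subseteq> Q_vec.span ((\<lambda>(t, \<kappa>) j. if j = t then \<kappa> else 0) ` ({..<n} \<times> E))"
    (is "_ \<subseteq> Q_vec.span ?C")
proof
  fix w assume w: "w \<in> mcarrier (free_power R n)"
  have "(\<lambda>j. if j = t then w t else 0) \<in> Q_vec.span ?C" if "t < n" for t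
  proof -
    have "w t \<in> Q_cplx.span E"
      using w \<open>t < n\<close> assms(2) by (auto simp: free_power_def)
    then obtain u where u: "w t = (\<Sum>\<kappa>\<in>E. of_rat (u \<kappa>) * \<kappa>)"
      unfolding Q_cplx.span_finite[OF assms(1)] by blast
    have "(\<lambda>j. if j = t then w t else 0) = (\<Sum>\<kappa>\<in>E. (\<lambda>j. of_rat (u \<kappa>) * (if j = t then \<kappa> else 0)))"
      by (auto simp: fun_eq_iff sum_fun_apply u)
    also have "\<dots> \<in> Q_vec.span ?C"
      using \<open>t < n\<close> by (intro Q_vec.span_sum Q_vec.span_scale Q_vec.span_base) force
    finally show ?thesis .
  qed
  then have "(\<Sum>t<n. (\<lambda>j. if j = t then w t else 0)) \<in> Q_vec.span ?C"
    by (intro Q_vec.span_sum) simp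
  moreover have "(\<Sum>t<n. (\<lambda>j. if j = t then w t else 0)) = w"
    using w by (auto simp: fun_eq_iff sum_fun_apply free_power_def)
  ultimately show "w \<in> Q_vec.span ?C"
    by simp
qed

lemma span_over_Rats_subset_span: "span_over \<rat> B \<subseteq> Q_cplx.span B"
proof
  fix x assume "x \<in> span_over \<rat> B"
  then obtain c where c: "\<forall>b\<in>B. c b \<in> \<rat>" "x = (\<Sum>b\<in>B. c b * b)"
    unfolding span_over_def by blast
  have "c b * b \<in> Q_cplx.span B" if "b \<in> B" for b
    using c(1) that Q_cplx.span_scale[OF Q_cplx.span_base[OF that]] by (auto elim!: Rats_cases)
  then show "x \<in> Q_cplx.span B"
    unfolding c(2) by (rule Q_cplx.span_sum)
qed

lemma algebraic_integer_of_int: "algebraic_integer (of_int k)"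
  unfolding algebraic_integer_def by (intro exI[of _ "[:-k, 1:]"]) (simp add: map_poly_pCons)

lemma ideal_is_fractional_ideal:
  assumes "is_subring \<Gamma>" "\<Gamma> \<subseteq> L" "is_subfield L" "I \<subseteq> \<Gamma>" "I \<noteq> {0}" "0 \<in> I"
    and "\<And>a b. a \<in> I \<Longrightarrow> b \<in> I \<Longrightarrow> a + b \<in> I"
    and "\<And>\<gamma> a. \<gamma> \<in> \<Gamma> \<Longrightarrow> a \<in> I \<Longrightarrow> \<gamma> * a \<in> I"
  shows "fractional_ideal \<Gamma> L I"
  unfolding fractional_ideal_def
  using assms subring_one[OF subfield_subring[OF assms(3)]] by (auto intro!: bexI[of _ 1])

definition unit_vec :: "nat \<Rightarrow> nat \<Rightarrow> complex" where
  "unit_vec t j = (if j = t then 1 else 0)"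

locale order_setting =
  fixes L K \<Gamma> :: "complex set" and \<phi> :: "complex \<Rightarrow> complex" and n :: nat and z :: int
  assumes number_field: "number_field L" and order: "is_order \<Gamma> L"
    and subfield_K: "is_subfield K" and K_subset_L: "K \<subseteq> L"
    and degree: "field_degree K L n" and morphism: "ring_morphism_on K L \<phi>"
    and z_pos: "z > 0" and phi_z_OK: "\<forall>a\<in>ring_of_integers K. \<phi> (of_int z * a) \<in> \<Gamma>"
begin

abbreviation OK :: "complex set" where "OK \<equiv> ring_of_integers K"
abbreviation O' :: "complex set" where "O' \<equiv> gen_subring ((\<lambda>a. of_int z * a) ` OK)"
abbreviation M :: "(nat \<Rightarrow> complex) set" where "M \<equiv> mcarrier (free_power OK n)"

lemma subring_\<Gamma>: "is_subring \<Gamma>" and \<Gamma>_subset_L: "\<Gamma> \<subseteq> L"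
  using order unfolding is_order_def by auto

lemma of_int_\<Gamma>: "of_int k \<in> \<Gamma>"
  using subring_of_int[OF subring_\<Gamma>] .

lemma subfield_L: "is_subfield L"
  using number_field unfolding number_field_def by auto

lemma subring_K: "is_subring K"
  using subfield_K by (rule subfield_subring)

lemma of_int_OK: "of_int k \<in> OK"
  unfolding ring_of_integers_def using algebraic_integer_of_int subring_of_int[OF subring_K] by auto

lemma zero_M: "0 \<in> M"
  using of_int_OK[of 0] by (simp add: free_power_def)

lemma unit_vec_M: "t < n \<Longrightarrow> unit_vec t \<in> M"
  using of_int_OK[of 0] of_int_OK[of 1] by (simp add: free_power_def unit_vec_def)

lemma phi_O'_in_\<Gamma>: "r \<in> O' \<Longrightarrow> \<phi> r \<in> \<Gamma>"
proof -
  have "is_subring {a \<in> K. \<phi> a \<in> \<Gamma>}"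
    using morphism subring_K subring_\<Gamma> ring_morphism_on_uminus[OF morphism subring_K]
    unfolding is_subring_def ring_morphism_on_def by auto
  moreover have "(\<lambda>a. of_int z * a) ` OK \<subseteq> {a \<in> K. \<phi> a \<in> \<Gamma>}"
    using phi_z_OK subring_mult[OF subring_K subring_of_int[OF subring_K]]
    unfolding ring_of_integers_def by auto
  ultimately show "r \<in> O' \<Longrightarrow> \<phi> r \<in> \<Gamma>" using gen_subring_least by blast
qed

lemma n_pos: "n > 0"
proof -
  obtain B where B: "basis_over K L B" "card B = n"
    using degree unfolding field_degree_def by blast
  have "1 \<in> L" using subring_one[OF subfield_subring[OF subfield_L]] .
  then have "B \<noteq> {}" using B(1) unfolding basis_over_def span_over_def by auto
  then show ?thesis using B unfolding basis_over_def by auto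
qed

lemma obtain_rat_basis_K:
  obtains E where "finite E" "E \<subseteq> K" "K \<subseteq> Q_cplx.span E" "rat_independent E id"
proof -
  obtain B where B: "basis_over \<rat> L B"
    using number_field unfolding number_field_def field_degree_def by blast
  then have L_span: "L \<subseteq> Q_cplx.span B" and "finite B"
    using span_over_Rats_subset_span unfolding basis_over_def by auto
  obtain E where E: "E \<subseteq> K" "Q_cplx.independent E" "K \<subseteq> Q_cplx.span E"
    using Q_cplx.basis_exists by metis
  have "finite E"
    using Q_cplx.independent_span_bound[OF \<open>finite B\<close> E(2)] E(1) K_subset_L L_span by blast
  moreover have "rat_independent E id"
    using E(2) Q_cplx.dependent_finite[OF \<open>finite E\<close>] unfolding rat_independent_def by auto
  ultimately show ?thesis using that E by blast
qed

lemma obtain_rat_independent_family: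
  obtains E and A :: "(complex \<times> complex) set" and g
  where "finite E" "K \<subseteq> Q_cplx.span E" "finite A" "card A = n * card E" "g ` A \<subseteq> \<Gamma>"
    "rat_independent A g"
proof -
  obtain E where E: "finite E" "E \<subseteq> K" "K \<subseteq> Q_cplx.span E" "rat_independent E id"
    by (rule obtain_rat_basis_K)
  obtain B where B: "basis_over K L B" "card B = n"
    using degree unfolding field_degree_def by blast
  define f :: "complex \<times> complex \<Rightarrow> complex" where "f = (\<lambda>(b, \<kappa>). b * \<kappa>)"
  have "finite B" "B \<subseteq> L" using B(1) unfolding basis_over_def by auto
  then have "finite (B \<times> E)" using E(1) by simp
  moreover have "f ` (B \<times> E) \<subseteq> L"
    using \<open>B \<subseteq> L\<close> E(2) K_subset_L subring_mult[OF subfield_subring[OF subfield_L]]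
    unfolding f_def by (auto simp: subset_iff)
  ultimately obtain N :: int where N: "N > 0" "\<forall>a\<in>f ` (B \<times> E). of_int N * a \<in> \<Gamma>"
    using order_common_denominator[OF order] by blast
  have "rat_independent (B \<times> E) (\<lambda>p. of_int N * f p)"
    using rat_independent_products[OF subfield_K B(1) E(4)] E(2) N(1)
    unfolding f_def by (intro rat_independent_scale) auto
  moreover have "card (B \<times> E) = n * card E"
    using B(2) by (simp add: card_cartesian_product)
  moreover have "(\<lambda>p. of_int N * f p) ` (B \<times> E) \<subseteq> \<Gamma>"
    using N(2) by auto
  ultimately show ?thesis
    using that E(1,3) \<open>finite (B \<times> E)\<close> by blast
qed

end

section \<open>Actions of \<open>\<Gamma>\<close> on \<open>O\<^sub>K\<^sup>n\<close>\<close>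

locale free_power_action = order_setting +
  fixes act :: "complex \<Rightarrow> (nat \<Rightarrow> complex) \<Rightarrow> nat \<Rightarrow> complex"
  (* Closure of M under addition is inherited from the module X by transport,
     instead of being derived from the theory of algebraic integers. *)
  assumes M_add: "w \<in> M \<Longrightarrow> w' \<in> M \<Longrightarrow> w + w' \<in> M"
    and act_closed: "\<gamma> \<in> \<Gamma> \<Longrightarrow> w \<in> M \<Longrightarrow> act \<gamma> w \<in> M"
    and act_add_left: "\<gamma> \<in> \<Gamma> \<Longrightarrow> \<delta> \<in> \<Gamma> \<Longrightarrow> w \<in> M \<Longrightarrow> act (\<gamma> + \<delta>) w = act \<gamma> w + act \<delta> w"
    and act_mult: "\<gamma> \<in> \<Gamma> \<Longrightarrow> \<delta> \<in> \<Gamma> \<Longrightarrow> w \<in> M \<Longrightarrow> act (\<gamma> * \<delta>) w = act \<gamma> (act \<delta> w)"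
    and act_O': "r \<in> O' \<Longrightarrow> w \<in> M \<Longrightarrow> act (\<phi> r) w = (\<lambda>j. r * w j)"
begin

lemma act_of_int: "w \<in> M \<Longrightarrow> act (of_int k) w = (\<lambda>j. of_int k * w j)"
  using act_O'[OF subring_of_int[OF gen_subring_subring]]
  by (simp add: ring_morphism_on_of_int[OF morphism subring_K])

lemma act_zero_left: "w \<in> M \<Longrightarrow> act 0 w = 0"
  using act_of_int[of w 0] by (simp add: zero_fun_def)

lemma act_zero_right: "\<gamma> \<in> \<Gamma> \<Longrightarrow> act \<gamma> 0 = 0"
  using act_mult[OF _ of_int_\<Gamma> zero_M, of \<gamma> 0] act_zero_left[OF zero_M] by simp

lemma act_diff_left:
  assumes "\<gamma> \<in> \<Gamma>" "\<delta> \<in> \<Gamma>" "w \<in> M"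
  shows "act (\<gamma> - \<delta>) w = act \<gamma> w - act \<delta> w"
proof -
  have "act \<delta> w + act (- \<delta>) w = 0"
    using act_add_left[OF assms(2) subring_uminus[OF subring_\<Gamma> assms(2)] assms(3)]
      act_zero_left[OF assms(3)] by simp
  then show ?thesis
    using act_add_left[OF assms(1) subring_uminus[OF subring_\<Gamma> assms(2)] assms(3)]
    by (simp add: eq_neg_iff_add_eq_0 add.commute)
qed

lemma act_sum_left:
  assumes "w \<in> M" "\<And>a. a \<in> A \<Longrightarrow> f a \<in> \<Gamma>"
  shows "act (\<Sum>a\<in>A. f a) w = (\<Sum>a\<in>A. act (f a) w)"
  using assms(2)
proof (induction A rule: infinite_finite_induct)
  case (insert x F)
  then show ?case
    using act_add_left[OF _ _ assms(1)] subring_sum[OF subring_\<Gamma>, of F f] by simp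
qed (simp_all add: act_zero_left[OF assms(1)])

lemma act_torsion_free:
  assumes "\<delta> \<in> \<Gamma>" "\<delta> \<noteq> 0" "w \<in> M" "act \<delta> w = 0"
  shows "w = 0"
proof -
  have "inverse \<delta> \<in> L"
    using subfield_inverse[OF subfield_L] \<Gamma>_subset_L assms(1) by blast
  then obtain N :: int where N: "N > 0" "of_int N * inverse \<delta> \<in> \<Gamma>"
    using order_common_denominator[OF order, of "{inverse \<delta>}"] by auto
  have "(of_int N * inverse \<delta>) * \<delta> = of_int N"
    using assms(2) by simp
  then have "(\<lambda>j. of_int N * w j) = act ((of_int N * inverse \<delta>) * \<delta>) w"
    using act_of_int[OF assms(3), of N] by (simp only:)
  also have "\<dots> = 0"
    using act_mult[OF N(2) assms(1,3)] assms(4) act_zero_right[OF N(2)] by simp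
  finally show ?thesis
    using N(1) by (simp add: fun_eq_iff)
qed

lemma act_left_inj:
  assumes "\<gamma> \<in> \<Gamma>" "\<delta> \<in> \<Gamma>" "w \<in> M" "w \<noteq> 0" "act \<gamma> w = act \<delta> w"
  shows "\<gamma> = \<delta>"
  using act_torsion_free[OF subring_diff[OF subring_\<Gamma> assms(1,2)] _ assms(3)] act_diff_left[OF assms(1-3)] assms(4,5)
  by auto

lemma act_rat_combination:
  assumes "g ` A \<subseteq> \<Gamma>" "e \<in> M" "\<And>a. a \<in> A \<Longrightarrow> of_int D * c a = of_int (\<alpha> a)"
  shows "act (\<Sum>a\<in>A. of_int (\<alpha> a) * g a) e = (\<lambda>j. of_int D * (\<Sum>a\<in>A. (\<lambda>j. of_rat (c a) * act (g a) e j)) j)"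
proof -
  have "act (\<Sum>a\<in>A. of_int (\<alpha> a) * g a) e = (\<Sum>a\<in>A. act (of_int (\<alpha> a)) (act (g a) e))"
    using assms(1,2) by (simp add: act_sum_left subring_mult[OF subring_\<Gamma> of_int_\<Gamma>] act_mult[OF of_int_\<Gamma>] image_subset_iff)
  also have "\<dots> = (\<Sum>a\<in>A. (\<lambda>j. of_rat (of_int D * c a) * act (g a) e j))"
    using assms by (intro sum.cong) (auto simp: act_of_int act_closed image_subset_iff)
  finally show ?thesis
    by (simp add: fun_eq_iff sum_fun_apply sum_distrib_left of_rat_mult mult.assoc)
qed

lemma orbit_family_independent:
  assumes "finite A" "g ` A \<subseteq> \<Gamma>" "rat_independent A g" "e \<in> M" "e \<noteq> 0"
    and sum_zero: "(\<Sum>a\<in>A. (\<lambda>j. of_rat (c a) * act (g a) e j)) = 0"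
  shows "\<forall>a\<in>A. c a = 0"
proof -
  obtain D \<alpha> where D: "D > 0" "\<And>a. a \<in> A \<Longrightarrow> of_int D * c a = of_int (\<alpha> a)"
    using rat_common_denominator[OF assms(1)] by metis
  have "(\<Sum>a\<in>A. of_int (\<alpha> a) * g a) \<in> \<Gamma>"
    using assms(2) by (auto intro!: subring_sum[OF subring_\<Gamma>] subring_mult[OF subring_\<Gamma> of_int_\<Gamma>])
  moreover have "act (\<Sum>a\<in>A. of_int (\<alpha> a) * g a) e = 0"
    using act_rat_combination[OF assms(2,4) D(2)] sum_zero by (simp add: zero_fun_def)
  ultimately have "(\<Sum>a\<in>A. of_rat (of_int (\<alpha> a)) * g a) = 0"
    using act_torsion_free assms(4,5) by fastforce
  then show ?thesis
    using assms(3) D unfolding rat_independent_def by fastforce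
qed

lemma obtain_orbit_spanning_family:
  assumes "e \<in> M" "e \<noteq> 0"
  obtains A :: "(complex \<times> complex) set" and g
  where "finite A" "g ` A \<subseteq> \<Gamma>" "inj_on (\<lambda>a. act (g a) e) A"
    "M \<subseteq> Q_vec.span ((\<lambda>a. act (g a) e) ` A)"
proof -
  obtain E and A :: "(complex \<times> complex) set" and g
    where E: "finite E" "K \<subseteq> Q_cplx.span E" and A: "finite A" "card A = n * card E"
      and g: "g ` A \<subseteq> \<Gamma>" "rat_independent A g"
    by (rule obtain_rat_independent_family)
  define W where "W a = act (g a) e" for a
  define C where "C = (\<lambda>(t, \<kappa>) j. if j = t then \<kappa> else (0::complex)) ` ({..<n} \<times> E)"
  have W: "inj_on W A" "Q_vec.independent (W ` A)"
    using Q_vec.independent_family_image[OF A(1) orbit_family_independent[OF A(1) g assms]]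
    unfolding W_def by auto
  have "OK \<subseteq> Q_cplx.span E"
    using E(2) unfolding ring_of_integers_def by auto
  then have M_C: "M \<subseteq> Q_vec.span C"
    unfolding C_def by (rule free_power_subset_span[OF E(1)])
  have W_C: "W ` A \<subseteq> Q_vec.span C"
    using M_C act_closed g(1) assms(1) unfolding W_def image_subset_iff by blast
  \<comment> \<open>the dimension count: \<open>C\<close> has at most, and \<open>W ` A\<close> exactly, \<open>n [K:\<rat>]\<close> elements\<close>
  have card_C: "card C \<le> card (W ` A)"
    using card_image_le[of "{..<n} \<times> E"] E(1) A(2) card_image[OF W(1)]
    unfolding C_def by (simp add: card_cartesian_product)
  have "finite C"
    using E(1) unfolding C_def by simp
  then have "Q_vec.span C \<subseteq> Q_vec.span (W ` A)"
    using Q_vec.independent_card_ge_span[OF _ W_C W(2) card_C] by simp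
  then show ?thesis
    using that[OF A(1) g(1)] W(1) M_C unfolding W_def by blast
qed

lemma multiple_in_orbit:
  assumes "e \<in> M" "e \<noteq> 0" "w \<in> M"
  shows "\<exists>N::int. N > 0 \<and> (\<exists>\<gamma>\<in>\<Gamma>. (\<lambda>j. of_int N * w j) = act \<gamma> e)"
proof -
  obtain A :: "(complex \<times> complex) set" and g
    where A: "finite A" "g ` A \<subseteq> \<Gamma>" "inj_on (\<lambda>a. act (g a) e) A"
      and span: "M \<subseteq> Q_vec.span ((\<lambda>a. act (g a) e) ` A)"
    using obtain_orbit_spanning_family[OF assms(1,2)] by blast
  obtain u where "w = (\<Sum>v\<in>(\<lambda>a. act (g a) e) ` A. (\<lambda>j. of_rat (u v) * v j))"
    using span assms(3) unfolding Q_vec.span_finite[OF finite_imageI[OF A(1)]] by blast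
  then have w: "w = (\<Sum>a\<in>A. (\<lambda>j. of_rat (u (act (g a) e)) * act (g a) e j))"
    by (simp add: sum.reindex[OF A(3)])
  obtain D \<alpha> where D: "D > 0" "\<And>a. a \<in> A \<Longrightarrow> of_int D * u (act (g a) e) = of_int (\<alpha> a)"
    using rat_common_denominator[OF A(1), of "\<lambda>a. u (act (g a) e)"] by metis
  have "(\<lambda>j. of_int D * w j) = act (\<Sum>a\<in>A. of_int (\<alpha> a) * g a) e"
    using act_rat_combination[OF A(2) assms(1) D(2)] w by simp
  moreover have "(\<Sum>a\<in>A. of_int (\<alpha> a) * g a) \<in> \<Gamma>"
    using A(2) by (auto intro!: subring_sum[OF subring_\<Gamma>] subring_mult[OF subring_\<Gamma> of_int_\<Gamma>])
  ultimately show ?thesis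
    using D(1) by blast
qed

lemma obtain_unit_vec_multiples_in_orbit:
  assumes "e \<in> M" "e \<noteq> 0"
  obtains N :: int and \<gamma> where "N > 0"
    "\<And>t. t < n \<Longrightarrow> \<gamma> t \<in> \<Gamma> \<and> (\<lambda>j. of_int N * unit_vec t j) = act (\<gamma> t) e"
proof -
  have "\<exists>N::int. N > 0 \<and> (\<forall>t\<in>{..<n}. \<exists>\<gamma>\<in>\<Gamma>. (\<lambda>j. of_int N * unit_vec t j) = act \<gamma> e)"
  proof (rule ex_common_positive_multiple)
    fix t assume "t \<in> {..<n}"
    then show "\<exists>N::int. N > 0 \<and> (\<exists>\<gamma>\<in>\<Gamma>. (\<lambda>j. of_int N * unit_vec t j) = act \<gamma> e)"
      using multiple_in_orbit[OF assms unit_vec_M] by simp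
  next
    fix t N and k :: int
    assume "\<exists>\<gamma>\<in>\<Gamma>. (\<lambda>j. of_int N * unit_vec t j) = act \<gamma> e"
    then obtain \<gamma> where \<gamma>: "\<gamma> \<in> \<Gamma>" "(\<lambda>j. of_int N * unit_vec t j) = act \<gamma> e" by blast
    have "act (of_int k * \<gamma>) e = (\<lambda>j. of_int (k * N) * unit_vec t j)"
      using act_mult[OF of_int_\<Gamma> \<gamma>(1) assms(1)] act_of_int[OF act_closed[OF \<gamma>(1) assms(1)]] \<gamma>(2)
      by (simp add: fun_eq_iff mult.assoc)
    then show "\<exists>\<gamma>\<in>\<Gamma>. (\<lambda>j. of_int (k * N) * unit_vec t j) = act \<gamma> e"
      using subring_mult[OF subring_\<Gamma> of_int_\<Gamma> \<gamma>(1)] by metis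
  qed simp
  then obtain N :: int where N: "N > 0" "\<forall>t\<in>{..<n}. \<exists>\<gamma>. \<gamma> \<in> \<Gamma> \<and> (\<lambda>j. of_int N * unit_vec t j) = act \<gamma> e"
    by blast
  from bchoice[OF N(2)] obtain \<gamma> where "\<forall>t\<in>{..<n}. \<gamma> t \<in> \<Gamma> \<and> (\<lambda>j. of_int N * unit_vec t j) = act (\<gamma> t) e"
    by blast
  then have "\<And>t. t < n \<Longrightarrow> \<gamma> t \<in> \<Gamma> \<and> (\<lambda>j. of_int N * unit_vec t j) = act (\<gamma> t) e"
    by simp
  then show ?thesis
    by (rule that[OF N(1)])
qed

lemma uniform_multiple_in_orbit:
  assumes "e \<in> M" "e \<noteq> 0"
  obtains m :: int where "m > 0" "\<And>w. w \<in> M \<Longrightarrow> \<exists>\<gamma>\<in>\<Gamma>. (\<lambda>j. of_int m * w j) = act \<gamma> e"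
proof -
  obtain N :: int and \<gamma> where N: "N > 0"
    and \<gamma>: "\<And>t. t < n \<Longrightarrow> \<gamma> t \<in> \<Gamma> \<and> (\<lambda>j. of_int N * unit_vec t j) = act (\<gamma> t) e"
    using obtain_unit_vec_multiples_in_orbit[OF assms] by blast
  \<comment> \<open>\<open>z w\<^sub>t \<in> O'\<close> acts through \<open>\<phi>\<close> by multiplication, so \<open>z N w\<close> is a \<open>\<Gamma>\<close>-combination of the \<open>N e\<^sub>t\<close>\<close>
  have "\<exists>\<gamma>'\<in>\<Gamma>. (\<lambda>j. of_int (z * N) * w j) = act \<gamma>' e" if w: "w \<in> M" for w
  proof -
    have O': "of_int z * w t \<in> O'" if "t < n" for t
      using w that gen_subring_base by (fastforce simp: free_power_def)
    have "(\<lambda>j. of_int (z * N) * w j) = (\<Sum>t<n. (\<lambda>j. (of_int z * w t) * (of_int N * unit_vec t j)))"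
    proof
      fix j
      show "of_int (z * N) * w j = (\<Sum>t<n. (\<lambda>j. (of_int z * w t) * (of_int N * unit_vec t j))) j"
        using w by (cases "j < n")
          (simp_all add: sum_fun_apply free_power_def unit_vec_def if_distrib[of "\<lambda>y. _ * y"] cong: if_cong)
    qed
    also have "\<dots> = (\<Sum>t<n. act (\<phi> (of_int z * w t)) (act (\<gamma> t) e))"
    proof (rule sum.cong[OF refl])
      fix t assume t: "t \<in> {..<n}"
      then have \<gamma>t: "\<gamma> t \<in> \<Gamma>" "act (\<gamma> t) e = (\<lambda>j. of_int N * unit_vec t j)"
        using \<gamma> by auto
      have "act (\<phi> (of_int z * w t)) (act (\<gamma> t) e) = (\<lambda>j. (of_int z * w t) * act (\<gamma> t) e j)"
        using act_O'[OF O' act_closed[OF \<gamma>t(1) assms(1)]] t by simp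
      then show "(\<lambda>j. (of_int z * w t) * (of_int N * unit_vec t j)) = act (\<phi> (of_int z * w t)) (act (\<gamma> t) e)"
        using \<gamma>t(2) by simp
    qed
    also have "\<dots> = (\<Sum>t<n. act (\<phi> (of_int z * w t) * \<gamma> t) e)"
      using \<gamma> phi_O'_in_\<Gamma>[OF O'] by (intro sum.cong) (simp_all add: act_mult[OF _ _ assms(1)])
    also have "\<dots> = act (\<Sum>t<n. \<phi> (of_int z * w t) * \<gamma> t) e"
      using \<gamma> phi_O'_in_\<Gamma>[OF O'] by (intro act_sum_left[OF assms(1), symmetric] subring_mult[OF subring_\<Gamma>]) auto
    finally have "(\<lambda>j. of_int (z * N) * w j) = act (\<Sum>t<n. \<phi> (of_int z * w t) * \<gamma> t) e" .
    moreover have "(\<Sum>t<n. \<phi> (of_int z * w t) * \<gamma> t) \<in> \<Gamma>"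
      using \<gamma> phi_O'_in_\<Gamma>[OF O'] by (intro subring_sum[OF subring_\<Gamma>] subring_mult[OF subring_\<Gamma>]) auto
    ultimately show ?thesis by blast
  qed
  then show ?thesis
    using that[of "z * N"] N z_pos by simp
qed

definition orbit_coordinate :: "(nat \<Rightarrow> complex) \<Rightarrow> int \<Rightarrow> ((nat \<Rightarrow> complex) \<Rightarrow> complex) \<Rightarrow> bool" where
  "orbit_coordinate e m c \<longleftrightarrow> (\<forall>w\<in>M. c w \<in> \<Gamma> \<and> (\<lambda>j. of_int m * w j) = act (c w) e)"

lemma obtain_orbit_coordinate:
  assumes "e \<in> M" "e \<noteq> 0"
  obtains m c where "m > 0" "orbit_coordinate e m c"
proof -
  obtain m :: int where m: "m > 0" "\<And>w. w \<in> M \<Longrightarrow> \<exists>\<gamma>\<in>\<Gamma>. (\<lambda>j. of_int m * w j) = act \<gamma> e"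
    using uniform_multiple_in_orbit[OF assms] by blast
  then have "\<forall>w\<in>M. \<exists>\<gamma>. \<gamma> \<in> \<Gamma> \<and> (\<lambda>j. of_int m * w j) = act \<gamma> e"
    by blast
  from bchoice[OF this] obtain c where "orbit_coordinate e m c"
    unfolding orbit_coordinate_def by blast
  then show ?thesis
    using that m(1) by blast
qed

context
  fixes e m c
  assumes e: "e \<in> M" "e \<noteq> 0" and m: "m > 0" and coordinate: "orbit_coordinate e m c"
begin

lemma orbit_coordinate_mem: "w \<in> M \<Longrightarrow> c w \<in> \<Gamma>"
  and orbit_coordinate_eq: "w \<in> M \<Longrightarrow> (\<lambda>j. of_int m * w j) = act (c w) e"
  using coordinate unfolding orbit_coordinate_def by auto

lemma orbit_coordinate_unique:
  assumes "w \<in> M" "\<gamma> \<in> \<Gamma>" "(\<lambda>j. of_int m * w j) = act \<gamma> e"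
  shows "c w = \<gamma>"
  using act_left_inj[OF orbit_coordinate_mem assms(2) e] orbit_coordinate_eq assms by simp

lemma orbit_coordinate_add:
  assumes "w \<in> M" "w' \<in> M"
  shows "c (w + w') = c w + c w'"
proof (rule orbit_coordinate_unique)
  have "(\<lambda>j. of_int m * (w + w') j) = (\<lambda>j. of_int m * w j) + (\<lambda>j. of_int m * w' j)"
    by (simp add: fun_eq_iff algebra_simps)
  then show "(\<lambda>j. of_int m * (w + w') j) = act (c w + c w') e"
    using assms orbit_coordinate_eq orbit_coordinate_mem act_add_left[OF _ _ e(1)] by simp
qed (use assms M_add orbit_coordinate_mem subring_add[OF subring_\<Gamma>] in auto)

lemma orbit_coordinate_act:
  assumes "\<gamma> \<in> \<Gamma>" "w \<in> M"
  shows "c (act \<gamma> w) = \<gamma> * c w"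
proof (rule orbit_coordinate_unique)
  have "(\<lambda>j. of_int m * act \<gamma> w j) = act (of_int m * \<gamma>) w"
    using act_mult[OF of_int_\<Gamma> assms] act_of_int act_closed[OF assms] by simp
  also have "\<dots> = act \<gamma> (act (c w) e)"
    using act_mult[OF assms(1) of_int_\<Gamma> assms(2)] act_of_int[OF assms(2)] orbit_coordinate_eq[OF assms(2)]
    by (simp add: mult.commute)
  also have "\<dots> = act (\<gamma> * c w) e"
    using act_mult[OF assms(1) orbit_coordinate_mem[OF assms(2)] e(1)] by simp
  finally show "(\<lambda>j. of_int m * act \<gamma> w j) = act (\<gamma> * c w) e" .
qed (use assms act_closed orbit_coordinate_mem subring_mult[OF subring_\<Gamma>] in auto)

lemma inj_on_orbit_coordinate: "inj_on c M"
proof (rule inj_onI)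
  fix w w' assume "w \<in> M" "w' \<in> M" "c w = c w'"
  then have "(\<lambda>j. of_int m * w j) = (\<lambda>j. of_int m * w' j)"
    using orbit_coordinate_eq by metis
  then show "w = w'"
    using m by (simp add: fun_eq_iff)
qed

lemma fractional_ideal_orbit_coordinate: "fractional_ideal \<Gamma> L (c ` M)"
proof (rule ideal_is_fractional_ideal)
  have "c e = of_int m"
    using orbit_coordinate_unique[OF e(1) of_int_\<Gamma>] act_of_int[OF e(1)] by simp
  have "of_int m \<in> c ` M"
    using image_eqI[where f = c, OF \<open>c e = of_int m\<close>[symmetric] e(1)] .
  then show "c ` M \<noteq> {0}"
  proof (rule contrapos_pn)
    assume "c ` M = {0}"
    then show "of_int m \<notin> c ` M"
      using m by simp
  qed
  have "c 0 = 0"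
    using orbit_coordinate_unique[OF zero_M subring_zero[OF subring_\<Gamma>]] act_zero_left[OF e(1)]
    by (simp add: zero_fun_def)
  then show "0 \<in> c ` M"
    using image_eqI[where f = c, OF _ zero_M] by simp
  show "a + b \<in> c ` M" if ab: "a \<in> c ` M" "b \<in> c ` M" for a b
  proof -
    obtain w w' where w: "w \<in> M" "w' \<in> M" and "a = c w" "b = c w'"
      using ab by blast
    then show ?thesis
      using image_eqI[where f = c, OF orbit_coordinate_add[OF w, symmetric] M_add[OF w]] by simp
  qed
  show "\<gamma> * a \<in> c ` M" if \<gamma>: "\<gamma> \<in> \<Gamma>" and a: "a \<in> c ` M" for \<gamma> a
  proof -
    obtain w where w: "w \<in> M" and "a = c w"
      using a by blast
    then show ?thesis
      using image_eqI[where f = c, OF orbit_coordinate_act[OF \<gamma> w, symmetric] act_closed[OF \<gamma> w]] by simp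
  qed
qed (use orbit_coordinate_mem subring_\<Gamma> \<Gamma>_subset_L subfield_L in auto)

end

end

section \<open>Modules, ideals and the injection\<close>

definition ideal_module :: "complex set \<Rightarrow> complex cmod" where
  "ideal_module I = \<lparr>mcarrier = I, madd = (+), mzero = 0, msmul = (*)\<rparr>"

lemma mod_iso_refl: "mod_iso R X X"
  unfolding mod_iso_def by (rule exI[of _ id]) simp

lemma mod_iso_trans:
  assumes "mod_iso R X Y" "mod_iso R Y Z"
  shows "mod_iso R X Z"
proof -
  obtain f where f: "bij_betw f (mcarrier X) (mcarrier Y)"
    "\<forall>x\<in>mcarrier X. \<forall>y\<in>mcarrier X. f (madd X x y) = madd Y (f x) (f y)"
    "\<forall>r\<in>R. \<forall>x\<in>mcarrier X. f (msmul X r x) = msmul Y r (f x)"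
    using assms(1) unfolding mod_iso_def by blast
  obtain g where g: "bij_betw g (mcarrier Y) (mcarrier Z)"
    "\<forall>x\<in>mcarrier Y. \<forall>y\<in>mcarrier Y. g (madd Y x y) = madd Z (g x) (g y)"
    "\<forall>r\<in>R. \<forall>x\<in>mcarrier Y. g (msmul Y r x) = msmul Z r (g x)"
    using assms(2) unfolding mod_iso_def by blast
  have "f x \<in> mcarrier Y" if "x \<in> mcarrier X" for x
    using f(1) that bij_betwE by blast
  then show ?thesis
    unfolding mod_iso_def using bij_betw_trans[OF f(1) g(1)] f(2,3) g(2,3)
    by (intro exI[of _ "g \<circ> f"]) simp
qed

lemma mod_iso_sym:
  assumes X: "is_module R X" and "mod_iso R X Y"
  shows "mod_iso R Y X"
proof -
  obtain f where f: "bij_betw f (mcarrier X) (mcarrier Y)"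
    "\<forall>x\<in>mcarrier X. \<forall>y\<in>mcarrier X. f (madd X x y) = madd Y (f x) (f y)"
    "\<forall>r\<in>R. \<forall>x\<in>mcarrier X. f (msmul X r x) = msmul Y r (f x)"
    using assms(2) unfolding mod_iso_def by blast
  define f' where "f' = inv_into (mcarrier X) f"
  have f': "f' a \<in> mcarrier X" "f (f' a) = a" if "a \<in> mcarrier Y" for a
    using that f(1) unfolding f'_def by (auto simp: bij_betw_inv_into_right bij_betw_def intro: inv_into_into)
  have f'f: "f' (f x) = x" if "x \<in> mcarrier X" for x
    using that f(1) unfolding f'_def by (simp add: bij_betw_inv_into_left)
  have closed: "madd X x y \<in> mcarrier X" if "x \<in> mcarrier X" "y \<in> mcarrier X" for x y
    using X that unfolding is_module_def by auto
  have closed_smul: "msmul X r x \<in> mcarrier X" if "r \<in> R" "x \<in> mcarrier X" for r x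
    using X that unfolding is_module_def by auto
  show ?thesis
    unfolding mod_iso_def
  proof (intro exI[of _ f'] conjI ballI)
    show "bij_betw f' (mcarrier Y) (mcarrier X)"
      unfolding f'_def by (rule bij_betw_inv_into[OF f(1)])
  next
    fix a b assume ab: "a \<in> mcarrier Y" "b \<in> mcarrier Y"
    then have "madd Y a b = f (madd X (f' a) (f' b))"
      using f(2) f' by simp
    then show "f' (madd Y a b) = madd X (f' a) (f' b)"
      using f'f closed f'(1) ab by simp
  next
    fix r a assume ra: "r \<in> R" "a \<in> mcarrier Y"
    then have "msmul Y r a = f (msmul X r (f' a))"
      using f(3) f' by simp
    then show "f' (msmul Y r a) = msmul X r (f' a)"
      using f'f closed_smul f'(1) ra by simp
  qed
qed

lemma equiv_mod_iso:
  assumes "\<And>X. X \<in> A \<Longrightarrow> is_module R X"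
  shows "equiv A {(X, Y). X \<in> A \<and> Y \<in> A \<and> mod_iso R X Y}"
proof (rule equivI)
  show "refl_on A {(X, Y). X \<in> A \<and> Y \<in> A \<and> mod_iso R X Y}"
    by (rule refl_onI) (auto intro: mod_iso_refl)
  show "sym {(X, Y). X \<in> A \<and> Y \<in> A \<and> mod_iso R X Y}"
    by (rule symI) (auto intro: mod_iso_sym assms)
  show "trans {(X, Y). X \<in> A \<and> Y \<in> A \<and> mod_iso R X Y}"
    by (rule transI) (auto intro: mod_iso_trans)
qed auto

lemma mod_iso_ideal_module_scale:
  assumes "x \<noteq> 0"
  shows "mod_iso R (ideal_module I) (ideal_module ((\<lambda>a. x * a) ` I))"
  unfolding mod_iso_def ideal_module_def
  using assms by (intro exI[of _ "\<lambda>a. x * a"]) (auto simp: bij_betw_def inj_on_def algebra_simps)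

lemma ex_inj_on_quotient:
  assumes R: "equiv A R" and P: "\<And>a. a \<in> A \<Longrightarrow> \<exists>b\<in>B. P a b"
    and S: "\<And>b. b \<in> B \<Longrightarrow> (b, b) \<in> S"
    and reflect: "\<And>a a' b b'. a \<in> A \<Longrightarrow> a' \<in> A \<Longrightarrow> P a b \<Longrightarrow> P a' b' \<Longrightarrow> (b, b') \<in> S \<Longrightarrow> (a, a') \<in> R"
  shows "\<exists>f. inj_on f (A // R) \<and> f ` (A // R) \<subseteq> B // S"
proof -
  define rep where "rep c = (SOME a. a \<in> c)" for c :: "'a set"
  define sel where "sel a = (SOME b. b \<in> B \<and> P a b)" for a
  have rep: "rep c \<in> c" "rep c \<in> A" if c: "c \<in> A // R" for c
  proof -
    obtain a where "a \<in> c"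
      using in_quotient_imp_non_empty[OF R c] by blast
    then show "rep c \<in> c"
      unfolding rep_def by (rule someI)
    then show "rep c \<in> A"
      using in_quotient_imp_subset[OF R c] by blast
  qed
  have sel: "sel a \<in> B" "P a (sel a)" if "a \<in> A" for a
    using someI_ex[of "\<lambda>b. b \<in> B \<and> P a b"] P[OF that] unfolding sel_def by auto
  have "inj_on (\<lambda>c. S `` {sel (rep c)}) (A // R)"
  proof (rule inj_onI)
    fix c c' assume c: "c \<in> A // R" "c' \<in> A // R" and eq: "S `` {sel (rep c)} = S `` {sel (rep c')}"
    have "(sel (rep c), sel (rep c')) \<in> S"
      using eq S[OF sel(1)[OF rep(2)[OF c(2)]]] by blast
    then have "(rep c, rep c') \<in> R"
      using reflect rep(2) sel(2) c by blast
    then show "c = c'"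
      using quotient_eq_iff[OF R c rep(1)[OF c(1)] rep(1)[OF c(2)]] by blast
  qed
  moreover have "(\<lambda>c. S `` {sel (rep c)}) ` (A // R) \<subseteq> B // S"
    using sel(1) rep(2) by (auto intro: quotientI)
  ultimately show ?thesis
    by blast
qed

definition transported_smul :: "('m, 'e) cmod_scheme \<Rightarrow> ('m \<Rightarrow> 'v) \<Rightarrow> complex \<Rightarrow> 'v \<Rightarrow> 'v" where
  "transported_smul X g r w = g (msmul X r (inv_into (mcarrier X) g w))"

lemma transported_smul:
  fixes g :: "'m \<Rightarrow> 'v::plus"
  assumes X: "is_module R X" and g: "bij_betw g (mcarrier X) V"
    and g_add: "\<And>x y. x \<in> mcarrier X \<Longrightarrow> y \<in> mcarrier X \<Longrightarrow> g (madd X x y) = g x + g y"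
  shows "\<And>w w'. w \<in> V \<Longrightarrow> w' \<in> V \<Longrightarrow> w + w' \<in> V"
    and "\<And>r w. r \<in> R \<Longrightarrow> w \<in> V \<Longrightarrow> transported_smul X g r w \<in> V"
    and "\<And>r s w. r \<in> R \<Longrightarrow> s \<in> R \<Longrightarrow> w \<in> V \<Longrightarrow>
      transported_smul X g (r + s) w = transported_smul X g r w + transported_smul X g s w"
    and "\<And>r s w. r \<in> R \<Longrightarrow> s \<in> R \<Longrightarrow> w \<in> V \<Longrightarrow>
      transported_smul X g (r * s) w = transported_smul X g r (transported_smul X g s w)"
    and "\<And>r x. x \<in> mcarrier X \<Longrightarrow> transported_smul X g r (g x) = g (msmul X r x)"
proof -
  let ?g' = "inv_into (mcarrier X) g"
  have g'_in: "?g' w \<in> mcarrier X" and g_g': "g (?g' w) = w" if "w \<in> V" for w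
    using that g by (auto simp: bij_betw_inv_into_right bij_betw_def intro: inv_into_into)
  have g'_g: "?g' (g x) = x" if "x \<in> mcarrier X" for x
    using that g by (simp add: bij_betw_inv_into_left)
  have g_in: "g x \<in> V" if "x \<in> mcarrier X" for x
    using g that bij_betwE by blast
  have add_closed: "madd X x y \<in> mcarrier X" if "x \<in> mcarrier X" "y \<in> mcarrier X" for x y
    using X that unfolding is_module_def by auto
  have smul_closed: "msmul X r x \<in> mcarrier X" if "r \<in> R" "x \<in> mcarrier X" for r x
    using X that unfolding is_module_def by auto
  have smul_add_left: "msmul X (r + s) x = madd X (msmul X r x) (msmul X s x)"
    if "r \<in> R" "s \<in> R" "x \<in> mcarrier X" for r s x
    using X that unfolding is_module_def by auto
  have smul_mult: "msmul X (r * s) x = msmul X r (msmul X s x)"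
    if "r \<in> R" "s \<in> R" "x \<in> mcarrier X" for r s x
    using X that unfolding is_module_def by auto
  show "w + w' \<in> V" if "w \<in> V" "w' \<in> V" for w w'
  proof -
    have "w + w' = g (madd X (?g' w) (?g' w'))"
      using g_add[OF g'_in g'_in] g_g' that by simp
    then show ?thesis
      using g_in[OF add_closed[OF g'_in g'_in]] that by simp
  qed
  show "transported_smul X g r w \<in> V" if "r \<in> R" "w \<in> V" for r w
    unfolding transported_smul_def using g_in[OF smul_closed[OF that(1) g'_in[OF that(2)]]] .
  show "transported_smul X g (r + s) w = transported_smul X g r w + transported_smul X g s w"
    if "r \<in> R" "s \<in> R" "w \<in> V" for r s w
    unfolding transported_smul_def using that smul_add_left g_add smul_closed g'_in by simp
  show "transported_smul X g (r * s) w = transported_smul X g r (transported_smul X g s w)"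
    if "r \<in> R" "s \<in> R" "w \<in> V" for r s w
    unfolding transported_smul_def using that smul_mult g'_g smul_closed g'_in by simp
  show "transported_smul X g r (g x) = g (msmul X r x)" if "x \<in> mcarrier X" for r x
    unfolding transported_smul_def using g'_g[OF that] by simp
qed

lemma mod_iso_ideal_module_image:
  assumes "inj_on f (mcarrier X)"
    and "\<And>x y. x \<in> mcarrier X \<Longrightarrow> y \<in> mcarrier X \<Longrightarrow> f (madd X x y) = f x + f y"
    and "\<And>r x. r \<in> R \<Longrightarrow> x \<in> mcarrier X \<Longrightarrow> f (msmul X r x) = r * f x"
  shows "mod_iso R X (ideal_module (f ` mcarrier X))"
  unfolding mod_iso_def ideal_module_def
  using assms by (intro exI[of _ f]) (simp add: inj_on_imp_bij_betw)

lemma mod_iso_of_proportional_ideals: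
  assumes "is_module R Y" "mod_iso R X (ideal_module I)" "mod_iso R Y (ideal_module I')"
    and "x \<noteq> 0" "I' = (\<lambda>a. x * a) ` I"
  shows "mod_iso R X Y"
proof -
  have "mod_iso R (ideal_module I) (ideal_module I')"
    using mod_iso_ideal_module_scale[OF assms(4)] assms(5) by simp
  then show ?thesis
    using mod_iso_trans[OF mod_iso_trans[OF assms(2)] mod_iso_sym[OF assms(1,3)]] by simp
qed

lemma J_modules_is_module: "X \<in> J_modules K \<phi> \<Gamma> n z \<Longrightarrow> is_module \<Gamma> X"
  unfolding J_modules_def Let_def by auto

lemma (in order_setting) obtain_transported_action:
  fixes X :: "'m cmod"
  assumes "X \<in> J_modules K \<phi> \<Gamma> n z"
  obtains g where "bij_betw g (mcarrier X) M"
    "\<And>x y. x \<in> mcarrier X \<Longrightarrow> y \<in> mcarrier X \<Longrightarrow> g (madd X x y) = g x + g y"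
    "free_power_action L K \<Gamma> \<phi> n z (transported_smul X g)"
proof -
  have X: "is_module \<Gamma> X" and "mod_iso O' (restrict_scalars \<phi> X) (free_power OK n)"
    using assms unfolding J_modules_def Let_def by auto
  then obtain g where g: "bij_betw g (mcarrier X) M"
    and g_add: "\<And>x y. x \<in> mcarrier X \<Longrightarrow> y \<in> mcarrier X \<Longrightarrow> g (madd X x y) = g x + g y"
    and g_O': "\<And>r x. r \<in> O' \<Longrightarrow> x \<in> mcarrier X \<Longrightarrow> g (msmul X (\<phi> r) x) = (\<lambda>j. r * g x j)"
    unfolding mod_iso_def restrict_scalars_def by (auto simp: free_power_def plus_fun_def)
  note act = transported_smul[where g = g, OF X g g_add]
  have "free_power_action L K \<Gamma> \<phi> n z (transported_smul X g)"
  proof (rule free_power_action.intro[OF order_setting_axioms], unfold_locales)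
    fix r w assume "r \<in> O'" "w \<in> M"
    then obtain x where "x \<in> mcarrier X" "w = g x"
      using g by (auto simp: bij_betw_def)
    then show "transported_smul X g (\<phi> r) w = (\<lambda>j. r * w j)"
      using act(5) g_O' \<open>r \<in> O'\<close> by simp
  qed (rule act; assumption)+
  then show ?thesis
    using that g g_add by blast
qed

lemma (in order_setting) J_module_iso_fractional_ideal:
  fixes X :: "'m cmod"
  assumes "X \<in> J_modules K \<phi> \<Gamma> n z"
  shows "\<exists>I. fractional_ideal \<Gamma> L I \<and> mod_iso \<Gamma> X (ideal_module I)"
proof -
  obtain g where g: "bij_betw g (mcarrier X) M"
    and g_add: "\<And>x y. x \<in> mcarrier X \<Longrightarrow> y \<in> mcarrier X \<Longrightarrow> g (madd X x y) = g x + g y"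
    and action: "free_power_action L K \<Gamma> \<phi> n z (transported_smul X g)"
    using obtain_transported_action[OF assms] by blast
  interpret free_power_action L K \<Gamma> \<phi> n z "transported_smul X g"
    by (fact action)
  have e: "unit_vec 0 \<in> M" "unit_vec 0 \<noteq> 0"
    using unit_vec_M[OF n_pos] by (auto simp: unit_vec_def fun_eq_iff)
  then obtain m c where m: "m > 0" and c: "orbit_coordinate (unit_vec 0) m c"
    using obtain_orbit_coordinate by blast
  have g_M: "g ` mcarrier X = M" and g_in: "\<And>x. x \<in> mcarrier X \<Longrightarrow> g x \<in> M"
    using g by (auto simp: bij_betw_def)
  have "inj_on (c \<circ> g) (mcarrier X)"
    using g inj_on_orbit_coordinate[OF e m c] g_M by (simp add: comp_inj_on bij_betw_def)
  moreover have "(c \<circ> g) (madd X x y) = (c \<circ> g) x + (c \<circ> g) y"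
    if "x \<in> mcarrier X" "y \<in> mcarrier X" for x y
    using that g_add orbit_coordinate_add[OF e m c] g_in by simp
  moreover have "(c \<circ> g) (msmul X \<gamma> x) = \<gamma> * (c \<circ> g) x"
    if "\<gamma> \<in> \<Gamma>" "x \<in> mcarrier X" for \<gamma> x
    using that orbit_coordinate_act[OF e m c _ g_in] transported_smul(5)[where g = g, OF J_modules_is_module[OF assms] g g_add]
    by simp
  ultimately have "mod_iso \<Gamma> X (ideal_module ((c \<circ> g) ` mcarrier X))"
    by (rule mod_iso_ideal_module_image)
  moreover have "(c \<circ> g) ` mcarrier X = c ` M"
    using g_M image_comp by metis
  ultimately show ?thesis
    using fractional_ideal_orbit_coordinate[OF e m c] by auto
qed

theorem lemma10p6:
  fixes L K \<Gamma> :: "complex set" and \<phi> :: "complex \<Rightarrow> complex" and n :: nat and z :: int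
  assumes "number_field L"
    and "is_order \<Gamma> L"
    and "is_subfield K" and "K \<subseteq> L"
    and "field_degree K L n"
    and "ring_morphism_on K L \<phi>"
    and "z > 0" and "\<forall>a\<in>ring_of_integers K. \<phi> (of_int z * a) \<in> \<Gamma>"
  shows "\<exists>f. inj_on f (J_phi K \<phi> \<Gamma> n z :: 'm cmod set set) \<and>
             f ` (J_phi K \<phi> \<Gamma> n z :: 'm cmod set set) \<subseteq> C_Gamma \<Gamma> L"
proof -
  interpret order_setting L K \<Gamma> \<phi> n z
    using assms by unfold_locales
  have "1 \<in> L"
    using subring_one[OF subfield_subring[OF subfield_L]] .
  show ?thesis
    unfolding J_phi_def C_Gamma_def
    apply (rule ex_inj_on_quotient[OF equiv_mod_iso,
          where P = "\<lambda>X I. fractional_ideal \<Gamma> L I \<and> mod_iso \<Gamma> X (ideal_module I)"])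
    subgoal by (rule J_modules_is_module)
    subgoal for X
      using J_module_iso_fractional_ideal[of X] by blast
    subgoal
      using \<open>1 \<in> L\<close> by (auto intro!: bexI[of _ 1])
    subgoal for X X'
      using mod_iso_of_proportional_ideals[OF J_modules_is_module[of X']] by blast
    done
qed

end
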